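(* Let $S^{(i)}_{n,k}$ be as defined (weights $a_j=1$, $n\ge2$, $1\le i\le n$). Convergence is in distribution. (1) For fixed $n\ge2$ and $k\to\infty$: $S^{(i)}_{n,k}/k\to\mathrm{Beta}(1,n-1)$. (2) For $n,k\to\infty$ with $k/n\to\infty$: $\frac nk S^{(i)}_{n,k}\to\mathrm{Exp}(1)$. (3) For $n,k\to\infty$ with $k/n\to c>0$: $S^{(i)}_{n,k}\to G$, where $\mathbb P\{G=0\}=\frac1{1+c}+\frac{c}{(1+c)^2}$ and $\mathbb P\{G=j\}=\frac{c^{j+1}}{(1+c)^{j+2}}$ for $j\ge1$. (4) For $n\to\infty$ with $k/n\to0$: $S^{(i)}_{n,k}\to0$.
   Context: For $\vec\ell=(\ell_1,\dots,\ell_k)$ with $n\ge\ell_1\ge\cdots\ge\ell_k\ge1$ and $1\le i\le n$ let $\sigma^{(i)}(\vec\ell)=|\{1\le j\le k-1:\ell_j=\ell_{j+1}=i\}|$. $S^{(i)}_{n,k}=\sigma^{(i)}(\vec\ell)$ for $\vec\ell$ uniformly random among the $\binom{n+k-1}{k}$ such sequences. $\mathrm{Beta}(1,n-1)$ has density $(n-1)(1-x)^{n-2}$ on $[0,1]$; $\mathrm{Exp}(1)$ has density $e^{-x}$ on $[0,\infty)$. *)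

theory Defs
  imports "HOL-Probability.Probability"
begin

definition seqs :: "nat \<Rightarrow> nat \<Rightarrow> nat list set" where
  "seqs n k = {l. length l = k \<and> sorted_wrt (\<ge>) l \<and> set l \<subseteq> {1..n}}"

text \<open>sigma^(i)(l): number of j with 1 <= j <= k-1 and l_j = l_(j+1) = i (0-indexed here).\<close>
definition sigma :: "nat \<Rightarrow> nat list \<Rightarrow> nat" where
  "sigma i l = card {j. Suc j < length l \<and> l ! j = i \<and> l ! Suc j = i}"

definition S_pmf :: "nat \<Rightarrow> nat \<Rightarrow> nat \<Rightarrow> nat pmf" where
  "S_pmf n k i = map_pmf (sigma i) (pmf_of_set (seqs n k))"

definition S_law :: "(nat \<Rightarrow> real) \<Rightarrow> nat \<Rightarrow> nat \<Rightarrow> nat \<Rightarrow> real measure" where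
  "S_law g n k i = measure_pmf (map_pmf g (S_pmf n k i))"

definition beta1_law :: "nat \<Rightarrow> real measure" where
  "beta1_law n = density lborel
     (\<lambda>x. ennreal (indicator {0..1} x * (real n - 1) * (1 - x) ^ (n - 2)))"

definition exp1_law :: "real measure" where
  "exp1_law = density lborel (\<lambda>x. ennreal (exponential_density 1 x))"

definition G_mass :: "real \<Rightarrow> nat \<Rightarrow> real" where
  "G_mass c j = (if j = 0 then 1 / (1 + c) + c / (1 + c)^2
                 else c ^ (j + 1) / (1 + c) ^ (j + 2))"

definition G_law :: "real \<Rightarrow> real measure" where
  "G_law c = distr (density (count_space UNIV) (\<lambda>j. ennreal (G_mass c j))) borel real"

end

theory Submission
  imports Defs
begin

text \<open>A non-increasing sequence is the same thing as a \<open>k\<close>-multiset over \<open>{1..n}\<close>, and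
  since the occurrences of \<open>i\<close> form one block, \<open>sigma i\<close> is one less than the multiplicity
  of \<open>i\<close>. Removing \<open>r\<close> copies of \<open>i\<close> is a bijection onto the multisets of size \<open>k - r\<close>, so
  the multiplicity is at least \<open>r\<close> with probability
  \<open>C(n+k-r-1, k-r) / C(n+k-1, k) = \<Prod>j<r. (k-j)/(n-1+k-j)\<close>, whatever \<open>i\<close> is. Hence the
  distribution function of \<open>a * S\<close> at \<open>x \<ge> 0\<close> is one minus this product at
  \<open>r = \<lfloor>x/a\<rfloor> + 2\<close>, and each part of the theorem is an elementary limit of it, which even
  holds at every point: for fixed \<open>n\<close> the same ratio equals \<open>\<Prod>t<n-1. 1 - r/(k+1+t)\<close>,
  which tends to \<open>(1-x)^(n-1)\<close>; for \<open>k/n \<rightarrow> c\<close> each of the \<open>r\<close> factors tends to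
  \<open>c/(1+c)\<close>; and for \<open>k/n \<rightarrow> \<infinity>\<close> the product is squeezed between
  \<open>exp (-r(n-1)/(k-r+1))\<close> and \<open>exp (-r(n-1)/(n-1+k))\<close>, both of which tend to \<open>exp (-x)\<close>.\<close>

lemma inj_on_mset_seqs: "inj_on mset (seqs n k)"
proof (rule inj_onI)
  fix x y assume "x \<in> seqs n k" "y \<in> seqs n k" "mset x = mset y"
  then have "sorted (rev x)" "sorted (rev y)" "mset (rev x) = mset (rev y)"
    by (auto simp: seqs_def sorted_wrt_rev)
  then show "x = y"
    by (metis properties_for_sort rev_rev_ident)
qed

lemma mset_seqs: "mset ` seqs n k = multisets_of_size {1..n} k"
proof
  show "mset ` seqs n k \<subseteq> multisets_of_size {1..n} k"
    by (auto simp: seqs_def multisets_of_size_def)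
  show "multisets_of_size {1..n} k \<subseteq> mset ` seqs n k"
  proof
    fix M assume M: "M \<in> multisets_of_size {1..n} k"
    have "rev (sorted_list_of_multiset M) \<in> seqs n k"
      using M by (auto simp: seqs_def multisets_of_size_def sorted_wrt_rev
          simp flip: size_mset)
    then show "M \<in> mset ` seqs n k"
      by (metis mset_rev mset_sorted_list_of_multiset rev_image_eqI)
  qed
qed

lemma finite_seqs: "finite (seqs n k)"
  by (metis finite_atLeastAtMost finite_imageD finite_multisets_of_size
      inj_on_mset_seqs mset_seqs)

lemma card_seqs: "card (seqs n k) = (n + k - 1) choose k"
  by (metis card_atLeastAtMost card_image card_multisets_of_size diff_Suc_1
      finite_atLeastAtMost inj_on_mset_seqs mset_seqs)

lemma seqs_nonempty: "1 \<le> n \<Longrightarrow> seqs n k \<noteq> {}"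
  by (metis card_seqs card.empty le_add_diff zero_less_binomial_iff not_less_zero)

lemma card_seqs_Suc:
  "1 \<le> n \<Longrightarrow> card (seqs n (Suc k)) * Suc k = (n + k) * card (seqs n k)"
  using Suc_times_binomial_eq[of "n + k - 1" k] by (simp add: card_seqs)

lemma card_seqs_pochhammer:
  assumes "1 \<le> n"
  shows "real (card (seqs n k)) = pochhammer (real k + 1) (n - 1) / fact (n - 1)"
proof -
  have "card (seqs n k) = (n - 1 + k) choose (n - 1)"
    using assms binomial_symmetric[of k "n + k - 1"] by (simp add: card_seqs add.commute)
  then show ?thesis
    using assms by (simp add: binomial_gbinomial gbinomial_pochhammer')
qed

lemma sigma_Cons:
  "sigma i (x # l) = sigma i l + (if l \<noteq> [] \<and> x = i \<and> hd l = i then 1 else 0)"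
proof -
  let ?A = "{j. Suc j < length l \<and> l ! j = i \<and> l ! Suc j = i}"
  have "{j. Suc j < length (x # l) \<and> (x # l) ! j = i \<and> (x # l) ! Suc j = i}
        = Suc ` ?A \<union> (if l \<noteq> [] \<and> x = i \<and> hd l = i then {0} else {})"
  proof (rule set_eqI)
    fix j
    show "j \<in> {j. Suc j < length (x # l) \<and> (x # l) ! j = i \<and> (x # l) ! Suc j = i} \<longleftrightarrow>
          j \<in> Suc ` ?A \<union> (if l \<noteq> [] \<and> x = i \<and> hd l = i then {0} else {})"
      by (cases j) (auto simp: image_iff hd_conv_nth)
  qed
  moreover have "finite ?A"
    by (rule finite_subset[of _ "{..<length l}"]) auto
  ultimately show ?thesis
    by (auto simp: sigma_def card_image)
qed

lemma sigma_sorted: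
  "sorted_wrt (\<ge>) l \<Longrightarrow> sigma i l = count_list l i - 1"
proof (induction l)
  case Nil
  then show ?case by (simp add: sigma_def)
next
  case (Cons x l)
  then have IH: "sigma i l = count_list l i - 1" and sorted: "sorted_wrt (\<ge>) (x # l)"
    by simp_all
  show ?case
  proof (cases l)
    case Nil
    then show ?thesis by (simp add: sigma_Cons sigma_def)
  next
    case (Cons h t)
    have below_x: "\<forall>y\<in>set l. y \<le> x" and below_h: "\<forall>y\<in>set t. y \<le> h"
      using sorted \<open>l = h # t\<close> by auto
    consider "x \<noteq> i" | "x = i" "h = i" | "x = i" "h \<noteq> i"
      by blast
    then show ?thesis
    proof cases
      case 1
      then show ?thesis using IH by (simp add: sigma_Cons)
    next
      case 2
      then show ?thesis using IH \<open>l = h # t\<close> by (simp add: sigma_Cons)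
    next
      case 3
      then have "h < i"
        using below_x \<open>l = h # t\<close> by auto
      then have "count_list l i = 0"
        using below_h \<open>l = h # t\<close> by (auto simp: count_list_0_iff)
      then show ?thesis using IH 3 \<open>l = h # t\<close> by (simp add: sigma_Cons)
    qed
  qed
qed

lemma card_multisets_of_size_count_ge:
  assumes "i \<in> A" "r \<le> k"
  shows "card {M \<in> multisets_of_size A k. r \<le> count M i} = card (multisets_of_size A (k - r))"
proof -
  have "bij_betw (\<lambda>M. M + replicate_mset r i) (multisets_of_size A (k - r))
          {M \<in> multisets_of_size A k. r \<le> count M i}"
  proof (rule bij_betw_byWitness[where f' = "\<lambda>M. M - replicate_mset r i"])
    show "\<forall>M\<in>{M \<in> multisets_of_size A k. r \<le> count M i}.
            M - replicate_mset r i + replicate_mset r i = M"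
      by (auto simp: multiset_eq_iff)
    show "(\<lambda>M. M + replicate_mset r i) ` multisets_of_size A (k - r)
            \<subseteq> {M \<in> multisets_of_size A k. r \<le> count M i}"
      using assms by (auto simp: multisets_of_size_def split: if_splits)
    show "(\<lambda>M. M - replicate_mset r i) ` {M \<in> multisets_of_size A k. r \<le> count M i}
            \<subseteq> multisets_of_size A (k - r)"
      by (auto simp: multisets_of_size_def size_Diff_submset subseteq_mset_def
          dest: in_diffD)
  qed simp
  then show ?thesis
    by (simp add: bij_betw_same_card)
qed

lemma card_count_list_ge:
  assumes "i \<in> {1..n}" "r \<le> k"
  shows "card {l \<in> seqs n k. r \<le> count_list l i} = card (seqs n (k - r))"
proof -
  have "mset ` {l \<in> seqs n k. r \<le> count_list l i}
          = {M \<in> multisets_of_size {1..n} k. r \<le> count M i}"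
    unfolding mset_seqs[symmetric] by (auto simp: count_mset)
  then have "card {l \<in> seqs n k. r \<le> count_list l i}
               = card {M \<in> multisets_of_size {1..n} k. r \<le> count M i}"
    by (metis (no_types, lifting) card_image inj_on_mset_seqs inj_on_subset mem_Collect_eq subsetI)
  also have "\<dots> = card (mset ` seqs n (k - r))"
    using assms by (simp add: card_multisets_of_size_count_ge mset_seqs)
  finally show ?thesis
    by (simp add: card_image inj_on_mset_seqs)
qed

text \<open>The ratio \<open>C(n+k-r-1, k-r) / C(n+k-1, k)\<close>, written as a telescoping product.\<close>
definition occurrence_tail :: "nat \<Rightarrow> nat \<Rightarrow> nat \<Rightarrow> real" where
  "occurrence_tail n k r = (\<Prod>j<r. (real k - real j) / (real n - 1 + real k - real j))"

lemma occurrence_tail_eq_0: "k < r \<Longrightarrow> occurrence_tail n k r = 0"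
  unfolding occurrence_tail_def by (rule prod_zero) (auto intro!: bexI[of _ k])

lemma occurrence_tail_eq_card_ratio:
  assumes "1 \<le> n" "r \<le> k"
  shows "occurrence_tail n k r = real (card (seqs n (k - r))) / real (card (seqs n k))"
  using \<open>r \<le> k\<close>
proof (induction r)
  case 0
  then show ?case
    using assms(1) finite_seqs seqs_nonempty by (simp add: occurrence_tail_def card_gt_0_iff)
next
  case (Suc r)
  define q where "q = (real k - real r) / (real n - 1 + real k - real r)"
  have "card (seqs n (k - r)) * (k - r) = (n + k - Suc r) * card (seqs n (k - Suc r))"
    using card_seqs_Suc[OF assms(1), of "k - Suc r"] Suc.prems by (simp add: Suc_diff_Suc)
  then have "real (card (seqs n (k - r))) * real (k - r)
               = real (n + k - Suc r) * real (card (seqs n (k - Suc r)))"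
    by (metis of_nat_mult)
  then have step: "real (card (seqs n (k - r))) * q = real (card (seqs n (k - Suc r)))"
    using Suc.prems assms(1) by (simp add: q_def of_nat_diff field_simps)
  have "occurrence_tail n k (Suc r) = occurrence_tail n k r * q"
    by (simp add: occurrence_tail_def q_def)
  also have "\<dots> = real (card (seqs n (k - r))) * q / real (card (seqs n k))"
    using Suc by simp
  also have "\<dots> = real (card (seqs n (k - Suc r))) / real (card (seqs n k))"
    by (simp only: step)
  finally show ?case .
qed

lemma occurrence_tail_eq_prod_shifted:
  assumes "1 \<le> n" "r \<le> k"
  shows "occurrence_tail n k r = (\<Prod>t<n - 1. 1 - real r / (real k + 1 + real t))"
proof -
  have "occurrence_tail n k r = real (card (seqs n (k - r))) / real (card (seqs n k))"
    using assms by (rule occurrence_tail_eq_card_ratio)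
  also have "\<dots> = pochhammer (real (k - r) + 1) (n - 1) / pochhammer (real k + 1) (n - 1)"
    using assms(1) by (simp add: card_seqs_pochhammer)
  also have "\<dots> = (\<Prod>t<n - 1. (real (k - r) + 1 + real t) / (real k + 1 + real t))"
    by (simp add: pochhammer_prod atLeast0LessThan prod_dividef)
  also have "\<dots> = (\<Prod>t<n - 1. 1 - real r / (real k + 1 + real t))"
  proof (intro prod.cong refl)
    fix t
    have "real k + 1 + real t > 0"
      by linarith
    then show "(real (k - r) + 1 + real t) / (real k + 1 + real t) = 1 - real r / (real k + 1 + real t)"
      using assms(2) by (simp add: of_nat_diff field_simps)
  qed
  finally show ?thesis .
qed

lemma prob_count_list_ge:
  assumes "1 \<le> n" "i \<in> {1..n}"
  shows "measure_pmf.prob (pmf_of_set (seqs n k)) {l. r \<le> count_list l i} = occurrence_tail n k r"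
proof (cases "r \<le> k")
  case True
  then show ?thesis
    using assms finite_seqs seqs_nonempty
    by (simp add: measure_pmf_of_set Int_def card_count_list_ge occurrence_tail_eq_card_ratio)
next
  case False
  then have "seqs n k \<inter> {l. r \<le> count_list l i} = {}"
    by (auto simp: seqs_def) (metis count_le_length le_trans not_le)
  then show ?thesis
    using False assms finite_seqs seqs_nonempty
    by (simp add: measure_pmf_of_set occurrence_tail_eq_0)
qed

lemma prob_sigma_le:
  assumes "1 \<le> n" "i \<in> {1..n}"
  shows "measure_pmf.prob (pmf_of_set (seqs n k)) {l. sigma i l \<le> t}
           = 1 - occurrence_tail n k (t + 2)"
proof -
  let ?p = "pmf_of_set (seqs n k)"
  let ?A = "{l. t + 2 \<le> count_list l i}"
  have "set_pmf ?p = seqs n k"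
    using assms(1) finite_seqs seqs_nonempty by simp
  then have "sigma i l \<le> t \<longleftrightarrow> l \<notin> ?A" if "l \<in> set_pmf ?p" for l
    using that by (auto simp: seqs_def sigma_sorted)
  then have eq_on_support: "{l. sigma i l \<le> t} \<inter> set_pmf ?p = (UNIV - ?A) \<inter> set_pmf ?p"
    by blast
  have "measure_pmf.prob ?p {l. sigma i l \<le> t}
          = measure_pmf.prob ?p ({l. sigma i l \<le> t} \<inter> set_pmf ?p)"
    by (rule measure_Int_set_pmf[symmetric])
  also have "\<dots> = measure_pmf.prob ?p (UNIV - ?A)"
    by (simp only: eq_on_support measure_Int_set_pmf)
  also have "\<dots> = 1 - measure_pmf.prob ?p ?A"
    using measure_pmf.prob_compl[of ?A ?p] by simp
  finally show ?thesis
    using assms by (simp add: prob_count_list_ge)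
qed

lemma cdf_S_law_scaled:
  assumes "1 \<le> n" "i \<in> {1..n}" "0 < a"
  shows "cdf (S_law (\<lambda>s. a * real s) n k i) x
           = (if x < 0 then 0 else 1 - occurrence_tail n k (nat \<lfloor>x / a\<rfloor> + 2))"
proof -
  have cdf_eq: "cdf (S_law (\<lambda>s. a * real s) n k i) x
                  = measure_pmf.prob (pmf_of_set (seqs n k)) {l. a * real (sigma i l) \<le> x}"
    by (simp add: S_law_def S_pmf_def cdf_def map_pmf_comp vimage_def)
  show ?thesis
  proof (cases "x < 0")
    case True
    have "x < a * real (sigma i l)" for l
      using True assms(3) by (smt (verit) mult_nonneg_nonneg of_nat_0_le_iff)
    then have "{l. a * real (sigma i l) \<le> x} = {}"
      by (simp add: not_le)
    then show ?thesis
      using True cdf_eq by simp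
  next
    case False
    have "a * real s \<le> x \<longleftrightarrow> s \<le> nat \<lfloor>x / a\<rfloor>" for s
    proof -
      have "a * real s \<le> x \<longleftrightarrow> real s \<le> x / a"
        using assms(3) by (simp add: pos_le_divide_eq mult.commute)
      also have "\<dots> \<longleftrightarrow> int s \<le> \<lfloor>x / a\<rfloor>"
        by (simp add: le_floor_iff)
      also have "\<dots> \<longleftrightarrow> s \<le> nat \<lfloor>x / a\<rfloor>"
        using False assms(3) by (simp add: le_nat_iff)
      finally show ?thesis .
    qed
    then show ?thesis
      using False cdf_eq assms(1,2) by (simp add: prob_sigma_le)
  qed
qed

lemma cdf_return_0: "cdf (return borel (0::real)) x = (if 0 \<le> x then 1 else 0)"
  by (simp add: cdf_def measure_return indicator_def)

lemma cdf_exp1_law: "cdf exp1_law x = (if 0 \<le> x then 1 - exp (- x) else 0)"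
proof -
  have "emeasure exp1_law {..x} = ennreal (erlang_CDF 0 1 x)"
    unfolding exp1_law_def by (rule emeasure_erlang_density) simp
  then show ?thesis
    by (simp add: cdf_def measure_def erlang_CDF_0)
qed

lemma cdf_beta1_law:
  assumes "2 \<le> n"
  shows "cdf (beta1_law n) x = (if x < 0 then 0 else if x \<le> 1 then 1 - (1 - x) ^ (n - 1) else 1)"
proof -
  define f where "f t = (real n - 1) * (1 - t) ^ (n - 2)" for t :: real
  define F where "F t = - ((1 - t) ^ (n - 1))" for t :: real
  have FTC: "(\<integral>\<^sup>+ t. ennreal (f t) * indicator {0..b} t \<partial>lborel) = ennreal (F b - F 0)"
    if "0 \<le> b" "b \<le> 1" for b
  proof (rule nn_integral_FTC_Icc)
    show "f \<in> borel_measurable borel"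
      unfolding f_def by measurable
    fix t assume t: "t \<in> {0..b}"
    show "0 \<le> f t"
      unfolding f_def using t that assms by auto
    have "(F has_real_derivative real (n - 1) * (1 - t) ^ (n - 1 - 1)) (at t)"
      unfolding F_def by (auto intro!: derivative_eq_intros)
    moreover have "n - 1 - 1 = n - 2"
      by simp
    ultimately show "(F has_real_derivative f t) (at t)"
      using assms by (simp add: f_def of_nat_diff)
  qed (use that in simp)
  have "emeasure (beta1_law n) {..x}
          = (\<integral>\<^sup>+ t. ennreal (indicator {0..1} t * (real n - 1) * (1 - t) ^ (n - 2)) * indicator {..x} t \<partial>lborel)"
    unfolding beta1_law_def by (rule emeasure_density) auto
  also have "\<dots> = (if x < 0 then 0 else ennreal (F (min x 1) - F 0))"
  proof (cases "x < 0")
    case True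
    then show ?thesis
      by (auto intro!: nn_integral_zero' AE_I2 simp: indicator_def)
  next
    case False
    then have "(\<integral>\<^sup>+ t. ennreal (indicator {0..1} t * (real n - 1) * (1 - t) ^ (n - 2)) * indicator {..x} t \<partial>lborel)
                 = (\<integral>\<^sup>+ t. ennreal (f t) * indicator {0..min x 1} t \<partial>lborel)"
      by (auto intro!: nn_integral_cong simp: indicator_def f_def)
    then show ?thesis
      using False FTC[of "min x 1"] by simp
  qed
  finally have "emeasure (beta1_law n) {..x} = (if x < 0 then 0 else ennreal (F (min x 1) - F 0))" .
  moreover have "0 \<le> F (min x 1) - F 0" if "0 \<le> x"
    using that by (auto simp: F_def min_def intro!: power_le_one)
  ultimately show ?thesis
    using assms by (auto simp: cdf_def measure_def F_def min_def)
qed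

lemma sum_G_mass:
  assumes "0 < c"
  shows "(\<Sum>j\<le>t. G_mass c j) = 1 - (c / (1 + c)) ^ (t + 2)"
proof (induction t)
  case 0
  have "1 + c \<noteq> 0"
    using assms by simp
  then show ?case
    by (simp add: G_mass_def divide_simps) algebra
next
  case (Suc t)
  define q where "q = c / (1 + c)"
  have "1 + c \<noteq> 0"
    using assms by simp
  then have "G_mass c (Suc t) = q ^ (t + 2) * (1 - q)"
    by (simp add: G_mass_def q_def power_divide field_simps)
  then show ?case
    using Suc by (simp add: q_def[symmetric] algebra_simps)
qed

lemma cdf_G_law:
  assumes "0 < c"
  shows "cdf (G_law c) x = (if x < 0 then 0 else 1 - (c / (1 + c)) ^ (nat \<lfloor>x\<rfloor> + 2))"
proof -
  let ?M = "point_measure UNIV (\<lambda>j. ennreal (G_mass c j))"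
  have "real j \<le> x \<longleftrightarrow> j \<le> nat \<lfloor>x\<rfloor>" if "0 \<le> x" for j
    using that by (simp add: le_nat_iff le_floor_iff)
  then have "real -` {..x} = (if x < 0 then {} else {..nat \<lfloor>x\<rfloor>})"
    by auto
  moreover have "measure ?M {..t} = (\<Sum>j\<le>t. G_mass c j)" for t
    using assms unfolding measure_def
    by (subst emeasure_point_measure_finite2) (auto simp: G_mass_def sum_ennreal sum_nonneg)
  ultimately show ?thesis
    unfolding cdf_def G_law_def point_measure_def[symmetric]
    using assms by (subst measure_distr) (auto simp: space_point_measure sum_G_mass)
qed

lemma weak_conv_m_S_law_scaled:
  fixes a :: "nat \<Rightarrow> real" and L :: "real measure"
  assumes nn: "\<And>m. 1 \<le> nn m" and ii: "\<And>m. ii m \<in> {1..nn m}"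
    and a: "\<forall>\<^sub>F m in sequentially. 0 < a m"
    and cdf_neg: "\<And>x. x < 0 \<Longrightarrow> cdf L x = 0"
    and tail: "\<And>x. 0 \<le> x \<Longrightarrow>
      (\<lambda>m. occurrence_tail (nn m) (kk m) (nat \<lfloor>x / a m\<rfloor> + 2)) \<longlonglongrightarrow> 1 - cdf L x"
  shows "weak_conv_m (\<lambda>m. S_law (\<lambda>s. a m * real s) (nn m) (kk m) (ii m)) L"
  unfolding weak_conv_m_def weak_conv_def
proof (intro allI impI)
  fix x :: real
  have "(\<lambda>m. if x < 0 then 0 else 1 - occurrence_tail (nn m) (kk m) (nat \<lfloor>x / a m\<rfloor> + 2))
          \<longlonglongrightarrow> cdf L x"
  proof (cases "x < 0")
    case True
    then show ?thesis
      using cdf_neg by simp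
  next
    case False
    then show ?thesis
      using tendsto_diff[OF tendsto_const[of 1] tail[of x]] by simp
  qed
  moreover have "\<forall>\<^sub>F m in sequentially.
      (if x < 0 then 0 else 1 - occurrence_tail (nn m) (kk m) (nat \<lfloor>x / a m\<rfloor> + 2))
        = cdf (S_law (\<lambda>s. a m * real s) (nn m) (kk m) (ii m)) x"
    using a by eventually_elim (use cdf_S_law_scaled[OF nn ii] in simp)
  ultimately show "(\<lambda>m. cdf (S_law (\<lambda>s. a m * real s) (nn m) (kk m) (ii m)) x) \<longlonglongrightarrow> cdf L x"
    by (rule Lim_transform_eventually)
qed

lemma tendsto_divide_common_scale:
  fixes f g y :: "'a \<Rightarrow> real"
  assumes "((\<lambda>m. f m / y m) \<longlongrightarrow> a) F" "((\<lambda>m. g m / y m) \<longlongrightarrow> b) F" "b \<noteq> 0"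
    and "\<forall>\<^sub>F m in F. y m \<noteq> 0"
  shows "((\<lambda>m. f m / g m) \<longlongrightarrow> a / b) F"
proof -
  have "((\<lambda>m. (f m / y m) / (g m / y m)) \<longlongrightarrow> a / b) F"
    using assms(1-3) by (rule tendsto_divide)
  moreover have "\<forall>\<^sub>F m in F. (f m / y m) / (g m / y m) = f m / g m"
    using assms(4) by eventually_elim simp
  ultimately show ?thesis
    by (rule Lim_transform_eventually)
qed

lemma tendsto_nat_floor_add_2_div:
  fixes y :: "'a \<Rightarrow> real"
  assumes y: "filterlim y at_top F" and "0 \<le> x"
  shows "((\<lambda>m. real (nat \<lfloor>x * y m\<rfloor> + 2) / y m) \<longlongrightarrow> x) F"
proof (rule tendsto_sandwich)
  have bounds: "x \<le> R / y m \<and> R / y m \<le> x + 2 / y m"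
    if "0 < y m" and R: "R = real (nat \<lfloor>x * y m\<rfloor> + 2)" for m R
  proof -
    have "R = of_int \<lfloor>x * y m\<rfloor> + 2"
      using \<open>0 \<le> x\<close> that by simp
    then have "x * y m \<le> R" "R \<le> x * y m + 2"
      using of_int_floor_le[of "x * y m"] real_of_int_floor_gt_diff_one[of "x * y m"] by linarith+
    then show ?thesis
      using \<open>0 < y m\<close> by (simp add: field_simps)
  qed
  have "\<forall>\<^sub>F m in F. 0 < y m"
    using y by (simp add: filterlim_at_top_dense)
  then show "\<forall>\<^sub>F m in F. x \<le> real (nat \<lfloor>x * y m\<rfloor> + 2) / y m"
    and "\<forall>\<^sub>F m in F. real (nat \<lfloor>x * y m\<rfloor> + 2) / y m \<le> x + 2 / y m"
    by (eventually_elim, use bounds in blast)+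
  show "((\<lambda>_. x) \<longlongrightarrow> x) F"
    by simp
  show "((\<lambda>m. x + 2 / y m) \<longlongrightarrow> x) F"
    using tendsto_add[OF tendsto_const real_tendsto_divide_at_top[OF tendsto_const y]] by simp
qed

lemma divide_add_left_mono:
  fixes N z w :: real
  assumes "0 \<le> N" "0 < z" "z \<le> w"
  shows "z / (N + z) \<le> w / (N + w)"
  using assms by (simp add: divide_simps) (simp add: algebra_simps mult_left_mono)

lemma occurrence_tail_le_power:
  assumes "1 \<le> n"
  shows "occurrence_tail n k r \<le> (real k / (real n - 1 + real k)) ^ r"
proof (cases "r \<le> k")
  case True
  have "occurrence_tail n k r \<le> (\<Prod>j<r. real k / (real n - 1 + real k))"
    unfolding occurrence_tail_def
  proof (rule prod_mono)
    fix j assume "j \<in> {..<r}"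
    then have "real j < real k"
      using True by simp
    then show "0 \<le> (real k - real j) / (real n - 1 + real k - real j) \<and>
        (real k - real j) / (real n - 1 + real k - real j) \<le> real k / (real n - 1 + real k)"
      using assms divide_add_left_mono[of "real n - 1" "real k - real j" "real k"]
      by (auto simp: algebra_simps)
  qed
  then show ?thesis
    by simp
next
  case False
  then show ?thesis
    using assms by (simp add: occurrence_tail_eq_0)
qed

lemma power_le_occurrence_tail:
  assumes "1 \<le> n" "r \<le> k"
  shows "((real k - real r + 1) / (real n - 1 + (real k - real r + 1))) ^ r \<le> occurrence_tail n k r"
proof -
  have "(\<Prod>j<r. (real k - real r + 1) / (real n - 1 + (real k - real r + 1))) \<le> occurrence_tail n k r"
    unfolding occurrence_tail_def
  proof (rule prod_mono)
    fix j assume "j \<in> {..<r}"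
    then have "real j + 1 \<le> real r"
      by simp
    then show "0 \<le> (real k - real r + 1) / (real n - 1 + (real k - real r + 1)) \<and>
        (real k - real r + 1) / (real n - 1 + (real k - real r + 1))
          \<le> (real k - real j) / (real n - 1 + real k - real j)"
      using assms divide_add_left_mono[of "real n - 1" "real k - real r + 1" "real k - real j"]
      by (auto simp: algebra_simps)
  qed
  then show ?thesis
    by simp
qed

lemma occurrence_tail_le_exp:
  assumes "2 \<le> n"
  shows "occurrence_tail n k r \<le> exp (- (real r * (real n - 1) / (real n - 1 + real k)))"
proof -
  have pos: "0 < real n - 1 + real k"
    using assms by simp
  have "real k / (real n - 1 + real k) = 1 + - ((real n - 1) / (real n - 1 + real k))"
    using pos by (simp add: field_simps)
  also have "\<dots> \<le> exp (- ((real n - 1) / (real n - 1 + real k)))"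
    by (rule exp_ge_add_one_self)
  finally have "(real k / (real n - 1 + real k)) ^ r \<le> exp (- ((real n - 1) / (real n - 1 + real k))) ^ r"
    using pos by (intro power_mono) auto
  also have "\<dots> = exp (- (real r * (real n - 1) / (real n - 1 + real k)))"
    by (simp flip: exp_of_nat_mult)
  finally show ?thesis
    using occurrence_tail_le_power[of n k r] assms by simp
qed

lemma exp_le_occurrence_tail:
  assumes "1 \<le> n" "r \<le> k"
  shows "exp (- (real r * (real n - 1) / (real k - real r + 1))) \<le> occurrence_tail n k r"
proof -
  define N L where "N = real n - 1" and "L = real k - real r + 1"
  have N: "0 \<le> N" and L: "0 < L"
    using assms by (simp_all add: N_def L_def)
  have "exp (- (N / L)) = inverse (exp (N / L))"
    by (simp add: exp_minus)
  also have "\<dots> \<le> inverse (1 + N / L)"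
    using N L by (intro le_imp_inverse_le exp_ge_add_one_self) (simp add: add_pos_nonneg)
  also have "\<dots> = L / (N + L)"
    using L by (simp add: field_simps)
  finally have "exp (- (N / L)) ^ r \<le> (L / (N + L)) ^ r"
    by (intro power_mono) auto
  then have "exp (- (real r * N / L)) \<le> (L / (N + L)) ^ r"
    by (simp add: exp_of_nat_mult[symmetric])
  also have "\<dots> \<le> occurrence_tail n k r"
    using power_le_occurrence_tail[OF assms] by (simp add: N_def L_def)
  finally show ?thesis
    by (simp add: N_def L_def)
qed

lemma occurrence_tail_tendsto_ratio:
  assumes nn: "filterlim nn at_top sequentially"
    and ratio: "(\<lambda>m. real (kk m) / real (nn m)) \<longlonglongrightarrow> c" and "0 \<le> c"
  shows "(\<lambda>m. occurrence_tail (nn m) (kk m) r) \<longlonglongrightarrow> (c / (1 + c)) ^ r"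
proof -
  have n_top: "filterlim (\<lambda>m. real (nn m)) at_top sequentially"
    using filterlim_compose[OF filterlim_real_sequentially nn] .
  have n_pos: "\<forall>\<^sub>F m in sequentially. 0 < real (nn m)"
    using n_top[unfolded filterlim_at_top_dense] by blast
  have small: "(\<lambda>m. d / real (nn m)) \<longlonglongrightarrow> 0" for d :: real
    using real_tendsto_divide_at_top[OF tendsto_const n_top] .
  have "(\<lambda>m. (real (kk m) - real j) / (real (nn m) - 1 + real (kk m) - real j)) \<longlonglongrightarrow> c / (1 + c)"
    for j
  proof (rule tendsto_divide_common_scale[where y = "\<lambda>m. real (nn m)"])
    have "(\<lambda>m. real (kk m) / real (nn m) - real j / real (nn m)) \<longlonglongrightarrow> c - 0"
      by (intro tendsto_diff ratio small)
    then show "(\<lambda>m. (real (kk m) - real j) / real (nn m)) \<longlonglongrightarrow> c"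
      by (simp add: diff_divide_distrib)
    have "(\<lambda>m. 1 + real (kk m) / real (nn m) - (1 + real j) / real (nn m)) \<longlonglongrightarrow> 1 + c - 0"
      by (intro tendsto_intros ratio small)
    moreover have "\<forall>\<^sub>F m in sequentially. 1 + real (kk m) / real (nn m) - (1 + real j) / real (nn m)
        = (real (nn m) - 1 + real (kk m) - real j) / real (nn m)"
      using n_pos by eventually_elim (simp add: field_simps)
    ultimately show "(\<lambda>m. (real (nn m) - 1 + real (kk m) - real j) / real (nn m)) \<longlonglongrightarrow> 1 + c"
      by (simp add: Lim_transform_eventually)
    show "1 + c \<noteq> 0"
      using \<open>0 \<le> c\<close> by simp
    show "\<forall>\<^sub>F m in sequentially. real (nn m) \<noteq> 0"
      using n_pos by eventually_elim simp
  qed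
  then have "(\<lambda>m. \<Prod>j<r. (real (kk m) - real j) / (real (nn m) - 1 + real (kk m) - real j))
      \<longlonglongrightarrow> (\<Prod>j<r. c / (1 + c))"
    by (rule tendsto_prod)
  then show ?thesis
    by (simp add: occurrence_tail_def)
qed

lemma tendsto_divide_real_add_const:
  assumes "(\<lambda>k. f k / real k) \<longlonglongrightarrow> x"
  shows "(\<lambda>k. f k / (real k + c)) \<longlonglongrightarrow> x"
proof -
  have k_pos: "\<forall>\<^sub>F k in sequentially. 0 < real k"
    by (simp add: eventually_gt_at_top)
  have "(\<lambda>k. 1 + c / real k) \<longlonglongrightarrow> 1 + 0"
    by (intro tendsto_add tendsto_const real_tendsto_divide_at_top[OF tendsto_const]
        filterlim_real_sequentially)
  moreover have "\<forall>\<^sub>F k in sequentially. 1 + c / real k = (real k + c) / real k"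
    using k_pos by eventually_elim (simp add: field_simps)
  ultimately have "(\<lambda>k. (real k + c) / real k) \<longlonglongrightarrow> 1"
    by (simp add: Lim_transform_eventually)
  moreover have "\<forall>\<^sub>F k in sequentially. real k \<noteq> 0"
    using k_pos by eventually_elim simp
  ultimately have "(\<lambda>k. f k / (real k + c)) \<longlonglongrightarrow> x / 1"
    by (rule tendsto_divide_common_scale[OF assms _ one_neq_zero])
  then show ?thesis
    by simp
qed

lemma occurrence_tail_floor_eq_0:
  assumes "1 \<le> x"
  shows "occurrence_tail n k (nat \<lfloor>x * real k\<rfloor> + 2) = 0"
proof (rule occurrence_tail_eq_0)
  have "real k \<le> x * real k"
    using assms by (simp add: mult_le_cancel_right1)
  then have "int k \<le> \<lfloor>x * real k\<rfloor>"
    by (simp add: le_floor_iff)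
  then show "k < nat \<lfloor>x * real k\<rfloor> + 2"
    by linarith
qed

lemma occurrence_tail_fixed_n_tendsto:
  assumes "2 \<le> n" "0 \<le> x"
  shows "(\<lambda>k. occurrence_tail n k (nat \<lfloor>x * real k\<rfloor> + 2))
           \<longlonglongrightarrow> (if x \<le> 1 then (1 - x) ^ (n - 1) else 0)"
proof (cases "x < 1")
  case False
  then have "occurrence_tail n k (nat \<lfloor>x * real k\<rfloor> + 2) = 0" for k
    by (intro occurrence_tail_floor_eq_0) simp
  moreover have "(if x \<le> 1 then (1 - x) ^ (n - 1) else 0) = (0::real)"
    using False assms(1) by auto
  ultimately show ?thesis
    by simp
next
  case True
  define r where "r k = nat \<lfloor>x * real k\<rfloor> + 2" for k
  have r_ratio: "(\<lambda>k. real (r k) / real k) \<longlonglongrightarrow> x"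
    unfolding r_def using filterlim_real_sequentially assms(2) by (rule tendsto_nat_floor_add_2_div)
  have k_pos: "\<forall>\<^sub>F k in sequentially. 0 < real k"
    by (simp add: eventually_gt_at_top)
  have "\<forall>\<^sub>F k in sequentially. real (r k) / real k < 1"
    using order_tendstoD(2)[OF r_ratio True] .
  then have prod_eq: "\<forall>\<^sub>F k in sequentially.
      (\<Prod>t<n - 1. 1 - real (r k) / (real k + 1 + real t)) = occurrence_tail n k (r k)"
    using k_pos
  proof eventually_elim
    case (elim k)
    then have "r k \<le> k"
      by (simp add: divide_less_eq)
    then show ?case
      using assms(1) by (simp add: occurrence_tail_eq_prod_shifted)
  qed
  have "(\<lambda>k. real (r k) / (real k + (1 + real t))) \<longlonglongrightarrow> x" for t
    using r_ratio by (rule tendsto_divide_real_add_const)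
  then have "(\<lambda>k. \<Prod>t<n - 1. 1 - real (r k) / (real k + 1 + real t)) \<longlonglongrightarrow> (\<Prod>t<n - 1. 1 - x)"
    by (intro tendsto_prod tendsto_diff tendsto_const) (simp add: add.assoc)
  then have "(\<lambda>k. occurrence_tail n k (r k)) \<longlonglongrightarrow> (\<Prod>t<n - 1. 1 - x)"
    using prod_eq by (rule Lim_transform_eventually)
  then show ?thesis
    using True by (simp add: r_def)
qed

lemma rescaled_exponent_eqs:
  fixes n k R :: real
  assumes "0 < n" "0 < k"
  defines "q \<equiv> R / (k / n)"
  shows "R / k = q / n"
    and "R * (n - 1) / (n - 1 + k) = q * (1 - 1 / n) / (1 + (1 - 1 / n) / (k / n))"
    and "R * (n - 1) / (k - R + 1) = q * (1 - 1 / n) / (1 - q / n + 1 / k)"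
proof -
  have scale: "q * (1 - 1 / n) = R * (n - 1) / k"
    using assms by (simp add: field_simps)
  show "R / k = q / n"
    using assms by (simp add: field_simps)
  have "1 + (1 - 1 / n) / (k / n) = (n - 1 + k) / k"
    using assms by (simp add: field_simps)
  then have "q * (1 - 1 / n) / (1 + (1 - 1 / n) / (k / n)) = (R * (n - 1) / k) / ((n - 1 + k) / k)"
    by (simp only: scale)
  then show "R * (n - 1) / (n - 1 + k) = q * (1 - 1 / n) / (1 + (1 - 1 / n) / (k / n))"
    using assms by simp
  have "1 - q / n + 1 / k = (k - R + 1) / k"
    using assms by (simp add: field_simps)
  then have "q * (1 - 1 / n) / (1 - q / n + 1 / k) = (R * (n - 1) / k) / ((k - R + 1) / k)"
    by (simp only: scale)
  then show "R * (n - 1) / (k - R + 1) = q * (1 - 1 / n) / (1 - q / n + 1 / k)"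
    using assms by simp
qed

text \<open>The rescaled index \<open>q = r / (k/n)\<close> tends to \<open>x\<close>, and in terms of it both exponents are
  continuous in \<open>q\<close>, \<open>1/n\<close>, \<open>1/k\<close> and \<open>n/k\<close>, all of which converge.\<close>
lemma floor_ratio_exponents_tendsto:
  fixes nn kk :: "nat \<Rightarrow> nat"
  assumes nn: "filterlim nn at_top sequentially" and kk: "filterlim kk at_top sequentially"
    and ratio: "filterlim (\<lambda>m. real (kk m) / real (nn m)) at_top sequentially" and "0 \<le> x"
  defines "r \<equiv> \<lambda>m. nat \<lfloor>x * (real (kk m) / real (nn m))\<rfloor> + 2"
  shows "\<forall>\<^sub>F m in sequentially. r m \<le> kk m"
    and "(\<lambda>m. real (r m) * (real (nn m) - 1) / (real (nn m) - 1 + real (kk m))) \<longlonglongrightarrow> x"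
    and "(\<lambda>m. real (r m) * (real (nn m) - 1) / (real (kk m) - real (r m) + 1)) \<longlonglongrightarrow> x"
proof -
  define q where "q m = real (r m) / (real (kk m) / real (nn m))" for m
  have n_top: "filterlim (\<lambda>m. real (nn m)) at_top sequentially"
    using filterlim_compose[OF filterlim_real_sequentially nn] .
  have k_top: "filterlim (\<lambda>m. real (kk m)) at_top sequentially"
    using filterlim_compose[OF filterlim_real_sequentially kk] .
  have "\<forall>\<^sub>F m in sequentially. 0 < real (nn m)" "\<forall>\<^sub>F m in sequentially. 0 < real (kk m)"
    using n_top[unfolded filterlim_at_top_dense] k_top[unfolded filterlim_at_top_dense] by blast+
  then have pos: "\<forall>\<^sub>F m in sequentially. 0 < real (nn m) \<and> 0 < real (kk m)"
    by (rule eventually_conj)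
  have q: "q \<longlonglongrightarrow> x"
    unfolding q_def r_def using ratio \<open>0 \<le> x\<close> by (rule tendsto_nat_floor_add_2_div)
  have q_n: "(\<lambda>m. q m / real (nn m)) \<longlonglongrightarrow> 0"
    using q n_top by (rule real_tendsto_divide_at_top)
  have inv_n: "(\<lambda>m. 1 / real (nn m)) \<longlonglongrightarrow> 0" and inv_k: "(\<lambda>m. 1 / real (kk m)) \<longlonglongrightarrow> 0"
    using n_top k_top by (auto intro: real_tendsto_divide_at_top[OF tendsto_const])
  have scale: "(\<lambda>m. q m * (1 - 1 / real (nn m))) \<longlonglongrightarrow> x * (1 - 0)"
    by (intro tendsto_mult q tendsto_diff tendsto_const inv_n)
  have "(\<lambda>m. (1 - 1 / real (nn m)) / (real (kk m) / real (nn m))) \<longlonglongrightarrow> 0"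
    using tendsto_diff[OF tendsto_const[of 1] inv_n] ratio by (rule real_tendsto_divide_at_top)
  then have upper: "(\<lambda>m. q m * (1 - 1 / real (nn m)) / (1 + (1 - 1 / real (nn m)) / (real (kk m) / real (nn m))))
                      \<longlonglongrightarrow> x * (1 - 0) / (1 + 0)"
    by (intro tendsto_divide tendsto_add scale tendsto_const) simp_all
  have lower: "(\<lambda>m. q m * (1 - 1 / real (nn m)) / (1 - q m / real (nn m) + 1 / real (kk m)))
                 \<longlonglongrightarrow> x * (1 - 0) / (1 - 0 + 0)"
    by (intro tendsto_divide tendsto_add tendsto_diff scale tendsto_const q_n inv_k) simp_all
  have "\<forall>\<^sub>F m in sequentially.
      q m * (1 - 1 / real (nn m)) / (1 + (1 - 1 / real (nn m)) / (real (kk m) / real (nn m)))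
        = real (r m) * (real (nn m) - 1) / (real (nn m) - 1 + real (kk m))"
    using pos by eventually_elim (simp add: q_def rescaled_exponent_eqs(2))
  with upper show "(\<lambda>m. real (r m) * (real (nn m) - 1) / (real (nn m) - 1 + real (kk m))) \<longlonglongrightarrow> x"
    by (simp add: Lim_transform_eventually)
  have "\<forall>\<^sub>F m in sequentially.
      q m * (1 - 1 / real (nn m)) / (1 - q m / real (nn m) + 1 / real (kk m))
        = real (r m) * (real (nn m) - 1) / (real (kk m) - real (r m) + 1)"
    using pos by eventually_elim (simp add: q_def rescaled_exponent_eqs(3))
  with lower show "(\<lambda>m. real (r m) * (real (nn m) - 1) / (real (kk m) - real (r m) + 1)) \<longlonglongrightarrow> x"
    by (simp add: Lim_transform_eventually)
  show "\<forall>\<^sub>F m in sequentially. r m \<le> kk m"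
    using order_tendstoD(2)[OF q_n zero_less_one] pos
  proof eventually_elim
    case (elim m)
    then have "real (r m) / real (kk m) < 1"
      by (simp add: q_def rescaled_exponent_eqs(1))
    then show ?case
      using elim by (simp add: divide_less_eq)
  qed
qed

lemma occurrence_tail_tendsto_exp:
  assumes nn: "filterlim nn at_top sequentially" and kk: "filterlim kk at_top sequentially"
    and ratio: "filterlim (\<lambda>m. real (kk m) / real (nn m)) at_top sequentially" and "0 \<le> x"
  shows "(\<lambda>m. occurrence_tail (nn m) (kk m) (nat \<lfloor>x * (real (kk m) / real (nn m))\<rfloor> + 2))
           \<longlonglongrightarrow> exp (- x)"
proof -
  define r where "r m = nat \<lfloor>x * (real (kk m) / real (nn m))\<rfloor> + 2" for m
  note exponents = floor_ratio_exponents_tendsto[OF assms, folded r_def]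
  have "\<forall>\<^sub>F m in sequentially. 2 \<le> nn m"
    using nn by (simp add: filterlim_at_top)
  with exponents(1)
  have "\<forall>\<^sub>F m in sequentially.
      exp (- (real (r m) * (real (nn m) - 1) / (real (kk m) - real (r m) + 1)))
        \<le> occurrence_tail (nn m) (kk m) (r m)"
    and "\<forall>\<^sub>F m in sequentially.
      occurrence_tail (nn m) (kk m) (r m)
        \<le> exp (- (real (r m) * (real (nn m) - 1) / (real (nn m) - 1 + real (kk m))))"
    by (eventually_elim, simp add: exp_le_occurrence_tail occurrence_tail_le_exp)+
  moreover have "(\<lambda>m. exp (- (real (r m) * (real (nn m) - 1) / (real (kk m) - real (r m) + 1))))
                   \<longlonglongrightarrow> exp (- x)"
    and "(\<lambda>m. exp (- (real (r m) * (real (nn m) - 1) / (real (nn m) - 1 + real (kk m)))))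
           \<longlonglongrightarrow> exp (- x)"
    using exponents(2,3) by (auto intro: tendsto_intros)
  ultimately have "(\<lambda>m. occurrence_tail (nn m) (kk m) (r m)) \<longlonglongrightarrow> exp (- x)"
    by (rule tendsto_sandwich)
  then show ?thesis
    by (simp add: r_def)
qed

lemma weak_conv_m_S_law_beta1:
  assumes "2 \<le> n" "1 \<le> i" "i \<le> n"
  shows "weak_conv_m (\<lambda>k. S_law (\<lambda>x. real x / real k) n k i) (beta1_law n)"
proof -
  have "weak_conv_m (\<lambda>k. S_law (\<lambda>s. 1 / real k * real s) n k i) (beta1_law n)"
  proof (rule weak_conv_m_S_law_scaled)
    show "\<forall>\<^sub>F k in sequentially. 0 < 1 / real k"
      by (simp add: eventually_gt_at_top)
    show "cdf (beta1_law n) x = 0" if "x < 0" for x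
      using that assms(1) by (simp add: cdf_beta1_law)
    show "(\<lambda>k. occurrence_tail n k (nat \<lfloor>x / (1 / real k)\<rfloor> + 2)) \<longlonglongrightarrow> 1 - cdf (beta1_law n) x"
      if "0 \<le> x" for x
    proof -
      have "1 - cdf (beta1_law n) x = (if x \<le> 1 then (1 - x) ^ (n - 1) else 0)"
        using that assms(1) by (simp add: cdf_beta1_law)
      moreover have "x / (1 / real k) = x * real k" for k
        by simp
      ultimately show ?thesis
        using occurrence_tail_fixed_n_tendsto[OF assms(1) that] by simp
    qed
  qed (use assms in auto)
  then show ?thesis
    by simp
qed

lemma weak_conv_m_S_law_exp1:
  assumes hyp: "\<forall>m. 2 \<le> nn m \<and> 1 \<le> ii m \<and> ii m \<le> nn m"
    and nn: "filterlim nn at_top sequentially" and kk: "filterlim kk at_top sequentially"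
    and ratio: "filterlim (\<lambda>m. real (kk m) / real (nn m)) at_top sequentially"
  shows "weak_conv_m (\<lambda>m. S_law (\<lambda>x. real (nn m) * real x / real (kk m)) (nn m) (kk m) (ii m))
           exp1_law"
proof -
  have index_bounds: "1 \<le> nn m" "ii m \<in> {1..nn m}" for m
    using hyp[rule_format, of m] by auto
  have "weak_conv_m (\<lambda>m. S_law (\<lambda>s. real (nn m) / real (kk m) * real s) (nn m) (kk m) (ii m)) exp1_law"
  proof (rule weak_conv_m_S_law_scaled)
    have "\<forall>\<^sub>F m in sequentially. 1 \<le> kk m"
      using kk by (simp add: filterlim_at_top)
    then show "\<forall>\<^sub>F m in sequentially. 0 < real (nn m) / real (kk m)"
    proof eventually_elim
      case (elim m)
      then show ?case
        using hyp[rule_format, of m] by simp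
    qed
    show "cdf exp1_law x = 0" if "x < 0" for x
      using that by (simp add: cdf_exp1_law)
    show "(\<lambda>m. occurrence_tail (nn m) (kk m) (nat \<lfloor>x / (real (nn m) / real (kk m))\<rfloor> + 2))
            \<longlonglongrightarrow> 1 - cdf exp1_law x" if "0 \<le> x" for x
      using occurrence_tail_tendsto_exp[OF nn kk ratio that] that by (simp add: cdf_exp1_law)
  qed (fact index_bounds)+
  then show ?thesis
    by simp
qed

lemma weak_conv_m_S_law_ratio:
  fixes L :: "real measure"
  assumes hyp: "\<forall>m. 2 \<le> nn m \<and> 1 \<le> ii m \<and> ii m \<le> nn m"
    and nn: "filterlim nn at_top sequentially"
    and ratio: "(\<lambda>m. real (kk m) / real (nn m)) \<longlonglongrightarrow> c" and "0 \<le> c"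
    and cdf_neg: "\<And>x. x < 0 \<Longrightarrow> cdf L x = 0"
    and cdf_nonneg: "\<And>x. 0 \<le> x \<Longrightarrow> cdf L x = 1 - (c / (1 + c)) ^ (nat \<lfloor>x\<rfloor> + 2)"
  shows "weak_conv_m (\<lambda>m. S_law real (nn m) (kk m) (ii m)) L"
proof -
  have index_bounds: "1 \<le> nn m" "ii m \<in> {1..nn m}" for m
    using hyp[rule_format, of m] by auto
  have "weak_conv_m (\<lambda>m. S_law (\<lambda>s. 1 * real s) (nn m) (kk m) (ii m)) L"
  proof (rule weak_conv_m_S_law_scaled)
    show "\<forall>\<^sub>F m in sequentially. (0::real) < 1"
      by simp
    show "(\<lambda>m. occurrence_tail (nn m) (kk m) (nat \<lfloor>x / 1\<rfloor> + 2)) \<longlonglongrightarrow> 1 - cdf L x"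
      if "0 \<le> x" for x
      unfolding div_by_1 cdf_nonneg[OF that] diff_diff_eq2 add_diff_cancel_left'
      by (rule occurrence_tail_tendsto_ratio[OF nn ratio \<open>0 \<le> c\<close>])
  qed (use index_bounds cdf_neg in auto)
  then show ?thesis
    by simp
qed

lemma weak_conv_m_S_law_G:
  assumes "0 < c" "\<forall>m. 2 \<le> nn m \<and> 1 \<le> ii m \<and> ii m \<le> nn m"
    and "filterlim nn at_top sequentially" and "(\<lambda>m. real (kk m) / real (nn m)) \<longlonglongrightarrow> c"
  shows "weak_conv_m (\<lambda>m. S_law real (nn m) (kk m) (ii m)) (G_law c)"
  using assms by (intro weak_conv_m_S_law_ratio[where c = c]) (simp_all add: cdf_G_law)

lemma weak_conv_m_S_law_zero:
  assumes "\<forall>m. 2 \<le> nn m \<and> 1 \<le> ii m \<and> ii m \<le> nn m"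
    and "filterlim nn at_top sequentially" and "(\<lambda>m. real (kk m) / real (nn m)) \<longlonglongrightarrow> 0"
  shows "weak_conv_m (\<lambda>m. S_law real (nn m) (kk m) (ii m)) (return borel 0)"
  using assms by (intro weak_conv_m_S_law_ratio[where c = 0]) (simp_all add: cdf_return_0)

theorem mainTheorem17:
  shows
  "(\<forall>n i. 2 \<le> n \<and> 1 \<le> i \<and> i \<le> n \<longrightarrow>
      weak_conv_m (\<lambda>k. S_law (\<lambda>x. real x / real k) n k i) (beta1_law n))
   \<and>
   (\<forall>nn kk ii :: nat \<Rightarrow> nat.
      (\<forall>m. 2 \<le> nn m \<and> 1 \<le> ii m \<and> ii m \<le> nn m) \<and>
      filterlim nn at_top sequentially \<and> filterlim kk at_top sequentially \<and>
      filterlim (\<lambda>m. real (kk m) / real (nn m)) at_top sequentially \<longrightarrow>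
      weak_conv_m (\<lambda>m. S_law (\<lambda>x. real (nn m) * real x / real (kk m)) (nn m) (kk m) (ii m))
                  exp1_law)
   \<and>
   (\<forall>(c::real) (nn :: nat \<Rightarrow> nat) (kk :: nat \<Rightarrow> nat) (ii :: nat \<Rightarrow> nat).
      0 < c \<and>
      (\<forall>m. 2 \<le> nn m \<and> 1 \<le> ii m \<and> ii m \<le> nn m) \<and>
      filterlim nn at_top sequentially \<and> filterlim kk at_top sequentially \<and>
      ((\<lambda>m. real (kk m) / real (nn m)) \<longlonglongrightarrow> c) \<longrightarrow>
      weak_conv_m (\<lambda>m. S_law real (nn m) (kk m) (ii m)) (G_law c))
   \<and>
   (\<forall>nn kk ii :: nat \<Rightarrow> nat.
      (\<forall>m. 2 \<le> nn m \<and> 1 \<le> ii m \<and> ii m \<le> nn m) \<and>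
      filterlim nn at_top sequentially \<and>
      ((\<lambda>m. real (kk m) / real (nn m)) \<longlonglongrightarrow> 0) \<longrightarrow>
      weak_conv_m (\<lambda>m. S_law real (nn m) (kk m) (ii m)) (return borel 0))"
  by (blast intro: weak_conv_m_S_law_beta1 weak_conv_m_S_law_exp1 weak_conv_m_S_law_G weak_conv_m_S_law_zero)

end
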